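(* Let $\Lambda$ be a finite set of sites and $N\ge1$. For each unordered pair $\langle xy\rangle$ of distinct sites let $\mathcal{V}_{xy}:[-1,1]\to\mathbb{R}$ be a function, and let $H(\{\sigma\})=-\sum_{\langle xy\rangle}\mathcal{V}_{xy}(\sigma_x\cdot\sigma_y)$ for $\sigma=(\sigma_x)_{x\in\Lambda}$, $\sigma_x\in S^{N-1}\subset\mathbb{R}^N$. Let $\mu$ be a nonnegative measure on $(S^{N-1})^\Lambda$ that is invariant under all transformations $\sigma_x\mapsto\eta_x\sigma_x$ with $\eta_x=\pm1$, and let $\langle\cdot\rangle_{H,\mu}$ denote expectation with respect to the probability measure $Z^{-1}e^{-H(\{\sigma\})}d\mu(\{\sigma\})$ (assumed normalizable). Set $\mathcal{V}^-_{xy}(s)=\tfrac12(\mathcal{V}_{xy}(s)-\mathcal{V}_{xy}(-s))$ and $J_{xy}=\sup_{s\in[-1,1]}|\mathcal{V}^-_{xy}(s)|$. Then for any sites $x_1,y_1,\dots,x_n,y_n\in\Lambda$, $$\big|\langle(\sigma_{x_1}\cdot\sigma_{y_1})\cdots(\sigma_{x_n}\cdot\sigma_{y_n})\rangle_{H,\mu}\big|\le \langle\varepsilon_{x_1}\varepsilon_{y_1}\cdots\varepsilon_{x_n}\varepsilon_{y_n}\rangle_{\mathrm{Ising},J}\,\langle|\sigma_{x_1}\cdot\sigma_{y_1}|\cdots|\sigma_{x_n}\cdot\sigma_{y_n}|\rangle_{H,\mu}$$ $$\le \langle\varepsilon_{x_1}\varepsilon_{y_1}\cdots\varepsilon_{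x_n}\varepsilon_{y_n}\rangle_{\mathrm{Ising},J}\,\langle(\sigma_{x_1}\cdot\sigma_{y_1})^2\cdots(\sigma_{x_n}\cdot\sigma_{y_n})^2\rangle_{H,\mu}^{1/2}\le\langle\varepsilon_{x_1}\varepsilon_{y_1}\cdots\varepsilon_{x_n}\varepsilon_{y_n}\rangle_{\mathrm{Ising},J}.$$
   Context: $\langle\cdot\rangle_{\mathrm{Ising},J}$ denotes expectation in the Ising model on $\Lambda$ with spins $\varepsilon_x\in\{\pm1\}$ and pair couplings $J_{xy}$: $\langle F\rangle_{\mathrm{Ising},J}=\sum_{\varepsilon}F(\varepsilon)e^{\sum_{\langle xy\rangle}J_{xy}\varepsilon_x\varepsilon_y}\big/\sum_{\varepsilon}e^{\sum_{\langle xy\rangle}J_{xy}\varepsilon_x\varepsilon_y}$, the sums running over $\varepsilon\in\{\pm1\}^\Lambda$. *)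

theory Defs
  imports "HOL-Analysis.Analysis"
begin

text \<open>Sites: a finite linearly ordered type 'a (the order is only used to enumerate
unordered pairs x < y once). Spins: vectors in real^'n, N = CARD('n) \<ge> 1.\<close>

definition hamiltonian :: "('a::{finite,linorder} \<Rightarrow> 'a \<Rightarrow> real \<Rightarrow> real)
    \<Rightarrow> ('a \<Rightarrow> real^'n) \<Rightarrow> real" where
  "hamiltonian V \<sigma> = - (\<Sum>(x,y)\<in>{(x,y). x < y}. V x y (\<sigma> x \<bullet> \<sigma> y))"

definition partition_fn :: "('a \<Rightarrow> real^'n) measure \<Rightarrow> (('a \<Rightarrow> real^'n) \<Rightarrow> real) \<Rightarrow> ennreal" where
  "partition_fn \<mu> H = (\<integral>\<^sup>+ \<sigma>. ennreal (exp (- H \<sigma>)) \<partial>\<mu>)"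

definition gibbs_expect :: "('a \<Rightarrow> real^'n) measure \<Rightarrow> (('a \<Rightarrow> real^'n) \<Rightarrow> real)
    \<Rightarrow> (('a \<Rightarrow> real^'n) \<Rightarrow> real) \<Rightarrow> real" where
  "gibbs_expect \<mu> H F = (\<integral>\<sigma>. F \<sigma> * exp (- H \<sigma>) \<partial>\<mu>) / enn2real (partition_fn \<mu> H)"

definition Vminus :: "(real \<Rightarrow> real) \<Rightarrow> real \<Rightarrow> real" where
  "Vminus v s = (v s - v (- s)) / 2"

definition Jcoupling :: "('a \<Rightarrow> 'a \<Rightarrow> real \<Rightarrow> real) \<Rightarrow> 'a \<Rightarrow> 'a \<Rightarrow> real" where
  "Jcoupling V x y = (SUP s\<in>{-1..1}. \<bar>Vminus (V x y) s\<bar>)"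

definition ising_configs :: "('a \<Rightarrow> real) set" where
  "ising_configs = {\<epsilon>. \<forall>x. \<epsilon> x = 1 \<or> \<epsilon> x = -1}"

definition ising_weight :: "('a::{finite,linorder} \<Rightarrow> 'a \<Rightarrow> real) \<Rightarrow> ('a \<Rightarrow> real) \<Rightarrow> real" where
  "ising_weight J \<epsilon> = exp (\<Sum>(x,y)\<in>{(x,y). x < y}. J x y * \<epsilon> x * \<epsilon> y)"

definition ising_expect :: "('a::{finite,linorder} \<Rightarrow> 'a \<Rightarrow> real) \<Rightarrow> (('a \<Rightarrow> real) \<Rightarrow> real) \<Rightarrow> real" where
  "ising_expect J F = (\<Sum>\<epsilon>\<in>ising_configs. F \<epsilon> * ising_weight J \<epsilon>)
                      / (\<Sum>\<epsilon>\<in>ising_configs. ising_weight J \<epsilon>)"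

end

(*
  Since mu is invariant under the spin flips sigma_x |-> eta_x sigma_x, every Gibbs expectation
  equals the expectation of the average over all 2^|Lambda| flips eta.  For a fixed configuration
  sigma, flipping by eta multiplies the product of the sigma_{x_i} . sigma_{y_i} by the Ising
  monomial eta_{x_1} eta_{y_1} ... eta_{x_n} eta_{y_n}, and multiplies exp (- H) by an Ising weight
  in eta whose couplings V^-_{xy}(sigma_x . sigma_y) are bounded in modulus by J_{xy}.  Ginibre's
  inequality for such Ising systems, obtained from Griffiths' first inequality by duplicating the
  spins, therefore bounds the flip average pointwise, which gives the first inequality.  The
  second one is Jensen's inequality, the third one holds because |sigma_x . sigma_y| <= 1.
*)
theory Submission
  imports Defs
begin

section \<open>Griffiths' and Ginibre's inequalities for Ising spins\<close>

definition spin_monomial :: "('a \<Rightarrow> nat) \<Rightarrow> ('a::finite \<Rightarrow> real) \<Rightarrow> real" where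
  "spin_monomial m \<tau> = (\<Prod>x\<in>UNIV. \<tau> x ^ m x)"

lemma ising_config_cases: "\<tau> \<in> ising_configs \<Longrightarrow> \<tau> x = 1 \<or> \<tau> x = -1"
  unfolding ising_configs_def by auto

lemma ising_configs_eq_PiE: "ising_configs = PiE UNIV (\<lambda>_. {1, -1::real})"
  unfolding ising_configs_def by (auto simp: PiE_def extensional_def)

lemma ising_configs_finite: "finite (ising_configs :: ('a::finite \<Rightarrow> real) set)"
  unfolding ising_configs_eq_PiE by (simp add: finite_PiE)

lemma one_in_ising_configs: "(\<lambda>_. 1) \<in> ising_configs"
  unfolding ising_configs_def by auto

lemma ising_configs_mult:
  "\<tau> \<in> ising_configs \<Longrightarrow> \<xi> \<in> ising_configs \<Longrightarrow> (\<lambda>x. \<tau> x * \<xi> x) \<in> ising_configs"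
  unfolding ising_configs_def by auto (metis mult_minus_left mult_1 mult_minus_right mult_1_right minus_minus)

lemma ising_configs_flip: "\<tau> \<in> ising_configs \<Longrightarrow> \<tau>(x := - \<tau> x) \<in> ising_configs"
  unfolding ising_configs_def by auto

lemma sum_ising_configs_reindex_mult:
  assumes "\<tau> \<in> ising_configs"
  shows "(\<Sum>\<eta>\<in>ising_configs. g \<eta>) = (\<Sum>\<xi>\<in>ising_configs. g (\<lambda>x. \<tau> x * \<xi> x))"
proof -
  have involution: "(\<lambda>x. \<tau> x * (\<tau> x * \<eta> x)) = \<eta>" for \<eta>
  proof
    show "\<tau> x * (\<tau> x * \<eta> x) = \<eta> x" for x
      using ising_config_cases[OF assms, of x] by auto
  qed
  show ?thesis
    by (rule sum.reindex_bij_witness[where i = "\<lambda>\<eta> x. \<tau> x * \<eta> x" and j = "\<lambda>\<eta> x. \<tau> x * \<eta> x"])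
      (auto simp: involution ising_configs_mult[OF assms])
qed

lemma ising_weight_pos: "0 < ising_weight J \<tau>"
  unfolding ising_weight_def by simp

lemma sum_ising_weight_pos:
  "0 < (\<Sum>\<tau>\<in>(ising_configs :: ('a::{finite,linorder} \<Rightarrow> real) set). ising_weight J \<tau>)"
  using ising_configs_finite one_in_ising_configs by (intro sum_pos) (auto simp: ising_weight_pos)

lemma ising_weight_mult:
  "ising_weight J \<tau> * ising_weight K (\<lambda>x. \<tau> x * \<xi> x)
     = ising_weight (\<lambda>x y. J x y + K x y * \<xi> x * \<xi> y) \<tau>"
  unfolding ising_weight_def exp_add[symmetric] sum.distrib[symmetric]
  by (rule arg_cong[where f = exp], rule sum.cong) (auto simp: algebra_simps)

lemma spin_monomial_remove:
  "spin_monomial m \<tau> = \<tau> x ^ m x * (\<Prod>z\<in>UNIV - {x}. \<tau> z ^ m z)"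
  unfolding spin_monomial_def by (rule prod.remove) auto

lemma spin_monomial_times_spin:
  "spin_monomial m \<tau> * \<tau> x = spin_monomial (m(x := Suc (m x))) \<tau>"
proof -
  have "(\<Prod>z\<in>UNIV - {x}. \<tau> z ^ (m(x := Suc (m x))) z) = (\<Prod>z\<in>UNIV - {x}. \<tau> z ^ m z)"
    by (rule prod.cong) auto
  then show ?thesis
    using spin_monomial_remove[of m \<tau> x] spin_monomial_remove[of "m(x := Suc (m x))" \<tau> x]
    by (simp add: algebra_simps)
qed

lemma spin_monomial_mult:
  "spin_monomial m (\<lambda>x. \<tau> x * \<xi> x) = spin_monomial m \<tau> * spin_monomial m \<xi>"
  unfolding spin_monomial_def by (simp add: power_mult_distrib prod.distrib)

lemma abs_spin_monomial:
  assumes "\<xi> \<in> ising_configs"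
  shows "\<bar>spin_monomial m \<xi>\<bar> = 1"
proof -
  have "\<bar>\<xi> x\<bar> = 1" for x
    using ising_config_cases[OF assms, of x] by auto
  then show ?thesis
    by (simp add: spin_monomial_def abs_prod power_abs)
qed

lemma prod_pairs_eq_spin_monomial:
  fixes xs ys :: "nat \<Rightarrow> 'a::finite"
  shows "\<exists>m. \<forall>\<tau>::'a \<Rightarrow> real. (\<Prod>i<n. \<tau> (xs i) * \<tau> (ys i)) = spin_monomial m \<tau>"
proof (induction n)
  case 0
  show ?case by (rule exI[of _ "\<lambda>_. 0"]) (simp add: spin_monomial_def)
next
  case (Suc n)
  then obtain m where m: "\<forall>\<tau>::'a \<Rightarrow> real. (\<Prod>i<n. \<tau> (xs i) * \<tau> (ys i)) = spin_monomial m \<tau>"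
    by blast
  define m' where "m' = m(xs n := Suc (m (xs n)))"
  have "(\<Prod>i<Suc n. \<tau> (xs i) * \<tau> (ys i)) = spin_monomial m \<tau> * \<tau> (xs n) * \<tau> (ys n)"
    for \<tau> :: "'a \<Rightarrow> real"
    using m by (simp add: mult.assoc)
  then have "(\<Prod>i<Suc n. \<tau> (xs i) * \<tau> (ys i)) = spin_monomial (m'(ys n := Suc (m' (ys n)))) \<tau>"
    for \<tau> :: "'a \<Rightarrow> real"
    by (simp only: m'_def spin_monomial_times_spin)
  then show ?case by blast
qed

text \<open>A spin monomial containing a spin to an odd power is cancelled by flipping that spin.\<close>
lemma sum_spin_monomial_nonneg:
  "0 \<le> (\<Sum>\<tau>\<in>ising_configs. spin_monomial m (\<tau> :: 'a::finite \<Rightarrow> real))"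
proof (cases "\<forall>x. even (m x)")
  case True
  then show ?thesis
    unfolding spin_monomial_def by (intro sum_nonneg prod_nonneg) (auto simp: zero_le_even_power)
next
  case False
  then obtain x where odd: "odd (m x)" by auto
  define flip where "flip \<tau> = \<tau>(x := - \<tau> x)" for \<tau> :: "'a \<Rightarrow> real"
  have "(\<Prod>z\<in>UNIV - {x}. flip \<tau> z ^ m z) = (\<Prod>z\<in>UNIV - {x}. \<tau> z ^ m z)" for \<tau>
    by (rule prod.cong) (auto simp: flip_def)
  then have flip_odd: "spin_monomial m (flip \<tau>) = - spin_monomial m \<tau>" for \<tau>
    using odd spin_monomial_remove[of m \<tau> x] spin_monomial_remove[of m "flip \<tau>" x]
    by (simp add: flip_def)
  have "(\<Sum>\<tau>\<in>ising_configs. spin_monomial m \<tau>) = (\<Sum>\<tau>\<in>ising_configs. spin_monomial m (flip \<tau>))"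
    by (rule sum.reindex_bij_witness[where i = flip and j = flip])
      (auto simp: flip_def ising_configs_flip)
  also have "\<dots> = - (\<Sum>\<tau>\<in>ising_configs. spin_monomial m \<tau>)"
    by (simp add: flip_odd sum_negf)
  finally show ?thesis by simp
qed

lemma exp_times_spin: "t = 1 \<or> t = -1 \<Longrightarrow> exp (c * t) = cosh c + sinh c * t"
  using cosh_plus_sinh[of c] cosh_minus_sinh[of c] by auto

text \<open>Griffiths' first inequality, by induction on the bonds: expanding
  \<open>exp (c \<tau>\<^sub>x \<tau>\<^sub>y) = cosh c + sinh c \<tau>\<^sub>x \<tau>\<^sub>y\<close> writes the sum as a combination with
  nonnegative coefficients of sums with one bond fewer.\<close>
lemma sum_spin_monomial_exp_nonneg:
  fixes c :: "'a::finite \<times> 'a \<Rightarrow> real"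
  assumes "finite E" "\<And>p. p \<in> E \<Longrightarrow> 0 \<le> c p"
  shows "0 \<le> (\<Sum>\<tau>\<in>ising_configs. spin_monomial m \<tau> * exp (\<Sum>p\<in>E. c p * \<tau> (fst p) * \<tau> (snd p)))"
  using assms
proof (induction E arbitrary: m rule: finite_induct)
  case empty
  then show ?case using sum_spin_monomial_nonneg by simp
next
  case (insert e E)
  obtain x y where e: "e = (x, y)" by fastforce
  define m' where "m' = m(x := Suc (m x))"
  define m'' where "m'' = m'(y := Suc (m' y))"
  define W where "W \<tau> = exp (\<Sum>p\<in>E. c p * \<tau> (fst p) * \<tau> (snd p))" for \<tau> :: "'a \<Rightarrow> real"
  have expand: "spin_monomial m \<tau> * exp (\<Sum>p\<in>insert e E. c p * \<tau> (fst p) * \<tau> (snd p))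
      = cosh (c e) * (spin_monomial m \<tau> * W \<tau>) + sinh (c e) * (spin_monomial m'' \<tau> * W \<tau>)"
    if "\<tau> \<in> ising_configs" for \<tau>
  proof -
    have "\<tau> x * \<tau> y = 1 \<or> \<tau> x * \<tau> y = -1"
      using ising_config_cases[OF that, of x] ising_config_cases[OF that, of y] by auto
    then have "exp (\<Sum>p\<in>insert e E. c p * \<tau> (fst p) * \<tau> (snd p))
        = (cosh (c e) + sinh (c e) * (\<tau> x * \<tau> y)) * W \<tau>"
      using insert.hyps by (simp add: e W_def exp_add mult.assoc exp_times_spin)
    moreover have "spin_monomial m \<tau> * \<tau> x * \<tau> y = spin_monomial m'' \<tau>"
      by (simp add: m'_def m''_def spin_monomial_times_spin)
    ultimately show ?thesis by (simp add: algebra_simps)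
  qed
  have "0 \<le> c e" using insert.prems by simp
  then have "0 \<le> cosh (c e)" "0 \<le> sinh (c e)" by simp_all
  moreover have "0 \<le> (\<Sum>\<tau>\<in>ising_configs. spin_monomial k \<tau> * W \<tau>)" for k
    unfolding W_def using insert.prems by (intro insert.IH) auto
  moreover have "(\<Sum>\<tau>\<in>ising_configs. spin_monomial m \<tau> * exp (\<Sum>p\<in>insert e E. c p * \<tau> (fst p) * \<tau> (snd p)))
      = cosh (c e) * (\<Sum>\<tau>\<in>ising_configs. spin_monomial m \<tau> * W \<tau>)
        + sinh (c e) * (\<Sum>\<tau>\<in>ising_configs. spin_monomial m'' \<tau> * W \<tau>)"
    by (simp add: expand sum.distrib sum_distrib_left cong: sum.cong)
  ultimately show ?case by (metis add_nonneg_nonneg mult_nonneg_nonneg)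
qed

lemma sum_spin_monomial_ising_weight_nonneg:
  fixes J :: "'a::{finite,linorder} \<Rightarrow> 'a \<Rightarrow> real"
  assumes "\<And>x y. x < y \<Longrightarrow> 0 \<le> J x y"
  shows "0 \<le> (\<Sum>\<tau>\<in>ising_configs. spin_monomial m \<tau> * ising_weight J \<tau>)"
  using sum_spin_monomial_exp_nonneg[of "{(x, y). x < y}" "\<lambda>(x, y). J x y" m] assms
  unfolding ising_weight_def by (simp add: split_def)

lemma ising_expect_spin_monomial_nonneg:
  fixes J :: "'a::{finite,linorder} \<Rightarrow> 'a \<Rightarrow> real"
  assumes "\<And>x y. x < y \<Longrightarrow> 0 \<le> J x y"
  shows "0 \<le> ising_expect J (spin_monomial m)"
  unfolding ising_expect_def
  by (rule divide_nonneg_pos[OF sum_spin_monomial_ising_weight_nonneg[OF assms] sum_ising_weight_pos])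

text \<open>Ginibre's duplicated system: the substitution \<open>\<eta> = \<tau> \<xi>\<close> turns the Ising weights of \<open>\<tau>\<close> and
  \<open>\<eta>\<close> into one weight of \<open>\<tau>\<close> with the nonnegative couplings \<open>J + K \<xi> \<xi>\<close>, to which Griffiths'
  first inequality applies for each fixed \<open>\<xi>\<close>.\<close>
lemma sum_duplicated_ising_nonneg:
  fixes J K :: "'a::{finite,linorder} \<Rightarrow> 'a \<Rightarrow> real"
  assumes JK: "\<And>x y. x < y \<Longrightarrow> \<bar>K x y\<bar> \<le> J x y" and s: "\<bar>s\<bar> \<le> 1"
  shows "0 \<le> (\<Sum>\<tau>\<in>ising_configs. \<Sum>\<eta>\<in>ising_configs.
     (spin_monomial m \<tau> + s * spin_monomial m \<eta>) * (ising_weight J \<tau> * ising_weight K \<eta>))"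
proof -
  let ?C = "ising_configs :: ('a \<Rightarrow> real) set"
  define J' where "J' \<xi> x y = J x y + K x y * \<xi> x * \<xi> y" for \<xi> :: "'a \<Rightarrow> real" and x y
  have "(\<Sum>\<tau>\<in>?C. \<Sum>\<eta>\<in>?C. (spin_monomial m \<tau> + s * spin_monomial m \<eta>) * (ising_weight J \<tau> * ising_weight K \<eta>))
      = (\<Sum>\<tau>\<in>?C. \<Sum>\<xi>\<in>?C. (1 + s * spin_monomial m \<xi>) * (spin_monomial m \<tau> * ising_weight (J' \<xi>) \<tau>))"
    (is "(\<Sum>\<tau>\<in>?C. ?L \<tau>) = (\<Sum>\<tau>\<in>?C. ?R \<tau>)")
  proof (rule sum.cong[OF refl])
    fix \<tau> assume \<tau>: "\<tau> \<in> ?C"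
    have weight: "ising_weight J \<tau> * ising_weight K (\<lambda>x. \<tau> x * \<xi> x) = ising_weight (J' \<xi>) \<tau>" for \<xi>
      unfolding J'_def by (rule ising_weight_mult)
    have "?L \<tau> = (\<Sum>\<xi>\<in>?C. (spin_monomial m \<tau> + s * spin_monomial m (\<lambda>x. \<tau> x * \<xi> x))
        * (ising_weight J \<tau> * ising_weight K (\<lambda>x. \<tau> x * \<xi> x)))"
      by (rule sum_ising_configs_reindex_mult[OF \<tau>])
    also have "\<dots> = ?R \<tau>"
      unfolding spin_monomial_mult weight by (simp add: algebra_simps)
    finally show "?L \<tau> = ?R \<tau>" .
  qed
  also have "\<dots> = (\<Sum>\<xi>\<in>?C. (1 + s * spin_monomial m \<xi>) * (\<Sum>\<tau>\<in>?C. spin_monomial m \<tau> * ising_weight (J' \<xi>) \<tau>))"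
    by (subst sum.swap) (simp add: sum_distrib_left)
  also have "0 \<le> \<dots>"
  proof (rule sum_nonneg, rule mult_nonneg_nonneg)
    fix \<xi> assume \<xi>: "\<xi> \<in> ?C"
    have "\<bar>s * spin_monomial m \<xi>\<bar> \<le> 1"
      using s by (simp add: abs_mult abs_spin_monomial[OF \<xi>])
    then show "0 \<le> 1 + s * spin_monomial m \<xi>"
      by (simp add: abs_le_iff)
    have "\<bar>K x y * \<xi> x * \<xi> y\<bar> = \<bar>K x y\<bar>" for x y
      using ising_config_cases[OF \<xi>, of x] ising_config_cases[OF \<xi>, of y] by auto
    then have "0 \<le> J' \<xi> x y" if "x < y" for x y
      unfolding J'_def using JK[OF that] by (smt (verit))
    then show "0 \<le> (\<Sum>\<tau>\<in>?C. spin_monomial m \<tau> * ising_weight (J' \<xi>) \<tau>)"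
      by (rule sum_spin_monomial_ising_weight_nonneg)
  qed
  finally show ?thesis .
qed

lemma ginibre_inequality:
  fixes J K :: "'a::{finite,linorder} \<Rightarrow> 'a \<Rightarrow> real"
  assumes JK: "\<And>x y. x < y \<Longrightarrow> \<bar>K x y\<bar> \<le> J x y"
  shows "\<bar>\<Sum>\<eta>\<in>ising_configs. spin_monomial m \<eta> * ising_weight K \<eta>\<bar>
     \<le> ising_expect J (spin_monomial m) * (\<Sum>\<eta>\<in>ising_configs. ising_weight K \<eta>)"
proof -
  let ?C = "ising_configs :: ('a \<Rightarrow> real) set" and ?f = "spin_monomial m"
  define NJ where "NJ = (\<Sum>\<tau>\<in>?C. ?f \<tau> * ising_weight J \<tau>)"
  define ZJ where "ZJ = (\<Sum>\<tau>\<in>?C. ising_weight J \<tau>)"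
  define NK where "NK = (\<Sum>\<eta>\<in>?C. ?f \<eta> * ising_weight K \<eta>)"
  define ZK where "ZK = (\<Sum>\<eta>\<in>?C. ising_weight K \<eta>)"
  have NJ_ZK: "NJ * ZK = (\<Sum>\<tau>\<in>?C. \<Sum>\<eta>\<in>?C. ?f \<tau> * (ising_weight J \<tau> * ising_weight K \<eta>))"
    unfolding NJ_def ZK_def sum_product by (simp add: mult.assoc)
  have "NK * ZJ = (\<Sum>\<eta>\<in>?C. \<Sum>\<tau>\<in>?C. ?f \<eta> * (ising_weight J \<tau> * ising_weight K \<eta>))"
    unfolding NK_def ZJ_def sum_product by (simp add: algebra_simps)
  also have "\<dots> = (\<Sum>\<tau>\<in>?C. \<Sum>\<eta>\<in>?C. ?f \<eta> * (ising_weight J \<tau> * ising_weight K \<eta>))"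
    by (rule sum.swap)
  finally have NK_ZJ: "NK * ZJ = \<dots>" .
  have "0 \<le> NJ * ZK + s * (NK * ZJ)" if "\<bar>s\<bar> \<le> 1" for s
  proof -
    have "0 \<le> (\<Sum>\<tau>\<in>?C. \<Sum>\<eta>\<in>?C. (?f \<tau> + s * ?f \<eta>) * (ising_weight J \<tau> * ising_weight K \<eta>))"
      by (rule sum_duplicated_ising_nonneg[OF JK that])
    also have "\<dots> = NJ * ZK + s * (NK * ZJ)"
      unfolding NJ_ZK NK_ZJ by (simp add: algebra_simps sum.distrib sum_distrib_left)
    finally show ?thesis .
  qed
  from this[of 1] this[of "-1"] have "\<bar>NK\<bar> * ZJ \<le> NJ * ZK"
    using sum_ising_weight_pos[of J] by (simp add: ZJ_def abs_if)
  then show ?thesis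
    using sum_ising_weight_pos[of J]
    by (simp add: ising_expect_def NJ_def ZJ_def NK_def ZK_def field_simps)
qed

section \<open>Symmetrization and Gibbs expectations\<close>

lemma integrable_mult_bounded:
  fixes f g :: "'b \<Rightarrow> real"
  assumes g: "integrable M g" and f: "f \<in> borel_measurable M" and bound: "AE x in M. \<bar>f x\<bar> \<le> 1"
  shows "integrable M (\<lambda>x. f x * g x)"
proof (rule Bochner_Integration.integrable_bound[OF integrable_abs[OF g]])
  show "(\<lambda>x. f x * g x) \<in> borel_measurable M"
    using f borel_measurable_integrable[OF g] by measurable
  show "AE x in M. norm (f x * g x) \<le> norm \<bar>g x\<bar>"
    using bound by eventually_elim (simp add: abs_mult mult_left_le_one_le)
qed

lemma integrable_compose_invariant:
  fixes h :: "'b \<Rightarrow> real"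
  assumes "T \<in> measurable M M" "distr M M T = M" "integrable M h"
  shows "integrable M (\<lambda>x. h (T x))"
  using integrable_distr_eq[OF assms(1) borel_measurable_integrable[OF assms(3)]] assms by simp

lemma integral_compose_invariant:
  fixes h :: "'b \<Rightarrow> real"
  assumes "T \<in> measurable M M" "distr M M T = M" "h \<in> borel_measurable M"
  shows "(\<integral>x. h (T x) \<partial>M) = (\<integral>x. h x \<partial>M)"
  using integral_distr[OF assms(1,3)] assms(2) by simp

lemma abs_integral_le_by_symmetrization:
  fixes f g :: "'b \<Rightarrow> real"
  assumes S: "finite S" "S \<noteq> {}"
    and T_meas: "\<And>s. s \<in> S \<Longrightarrow> T s \<in> measurable M M"
    and T_inv: "\<And>s. s \<in> S \<Longrightarrow> distr M M (T s) = M"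
    and f: "integrable M f" and g: "integrable M g"
    and bound: "AE x in M. \<bar>\<Sum>s\<in>S. f (T s x)\<bar> \<le> (\<Sum>s\<in>S. g (T s x))"
  shows "\<bar>\<integral>x. f x \<partial>M\<bar> \<le> (\<integral>x. g x \<partial>M)"
proof -
  have integrable_T: "integrable M (\<lambda>x. h (T s x))" if "s \<in> S" "integrable M h" for s and h :: "'b \<Rightarrow> real"
    by (rule integrable_compose_invariant[OF T_meas[OF that(1)] T_inv[OF that(1)] that(2)])
  have integral_T: "(\<integral>x. h (T s x) \<partial>M) = (\<integral>x. h x \<partial>M)" if "s \<in> S" "integrable M h" for s and h :: "'b \<Rightarrow> real"
    using integral_compose_invariant[OF T_meas[OF that(1)] T_inv[OF that(1)]] that(2) by simp
  have integrable_average: "integrable M (\<lambda>x. \<Sum>s\<in>S. h (T s x))" if "integrable M h" for h :: "'b \<Rightarrow> real"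
    using integrable_T[OF _ that] by simp
  have integral_average: "(\<integral>x. (\<Sum>s\<in>S. h (T s x)) \<partial>M) = card S * (\<integral>x. h x \<partial>M)"
    if "integrable M h" for h :: "'b \<Rightarrow> real"
    using integrable_T[OF _ that] integral_T[OF _ that] by simp
  have "card S * \<bar>\<integral>x. f x \<partial>M\<bar> = \<bar>\<integral>x. (\<Sum>s\<in>S. f (T s x)) \<partial>M\<bar>"
    by (simp add: integral_average[OF f] abs_mult)
  also have "\<dots> \<le> (\<integral>x. \<bar>\<Sum>s\<in>S. f (T s x)\<bar> \<partial>M)"
    by (rule integral_abs_bound)
  also have "\<dots> \<le> (\<integral>x. (\<Sum>s\<in>S. g (T s x)) \<partial>M)"
    using bound integrable_average[OF f] integrable_average[OF g] by (intro integral_mono_AE) auto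
  also have "\<dots> = card S * (\<integral>x. g x \<partial>M)"
    by (rule integral_average[OF g])
  finally show ?thesis
    using S by (simp add: card_gt_0_iff)
qed

context
  fixes \<mu> :: "('a \<Rightarrow> real^'n) measure" and H :: "('a \<Rightarrow> real^'n) \<Rightarrow> real"
  assumes H_meas: "H \<in> borel_measurable \<mu>"
    and Z_fin: "partition_fn \<mu> H < \<infinity>"
begin

lemma integrable_exp_neg:
  "integrable \<mu> (\<lambda>\<sigma>. exp (- H \<sigma>))"
  using H_meas Z_fin by (intro integrableI_nonneg) (auto simp: partition_fn_def)

lemma gibbs_expect_eq_integral:
  "gibbs_expect \<mu> H f = (\<integral>\<sigma>. f \<sigma> * exp (- H \<sigma>) \<partial>\<mu>) / (\<integral>\<sigma>. exp (- H \<sigma>) \<partial>\<mu>)"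
  unfolding gibbs_expect_def partition_fn_def
  using H_meas by (subst integral_eq_nn_integral) auto

lemma integral_exp_neg_pos:
  assumes "0 < partition_fn \<mu> H"
  shows "0 < (\<integral>\<sigma>. exp (- H \<sigma>) \<partial>\<mu>)"
  using assms Z_fin H_meas unfolding partition_fn_def
  by (subst integral_eq_nn_integral) (auto simp: enn2real_positive_iff)

lemma integrable_mult_exp_neg:
  assumes "f \<in> borel_measurable \<mu>" "AE \<sigma> in \<mu>. \<bar>f \<sigma>\<bar> \<le> 1"
  shows "integrable \<mu> (\<lambda>\<sigma>. f \<sigma> * exp (- H \<sigma>))"
  by (rule integrable_mult_bounded[OF integrable_exp_neg assms])

lemma gibbs_expect_le_one:
  assumes "f \<in> borel_measurable \<mu>" "AE \<sigma> in \<mu>. \<bar>f \<sigma>\<bar> \<le> 1"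
  shows "gibbs_expect \<mu> H f \<le> 1"
proof -
  have "(\<integral>\<sigma>. f \<sigma> * exp (- H \<sigma>) \<partial>\<mu>) \<le> (\<integral>\<sigma>. exp (- H \<sigma>) \<partial>\<mu>)"
    using assms(2) by (intro integral_mono_AE integrable_mult_exp_neg[OF assms] integrable_exp_neg)
      (auto simp: abs_le_iff elim!: eventually_mono)
  moreover have "0 \<le> (\<integral>\<sigma>. exp (- H \<sigma>) \<partial>\<mu>)"
    by (rule integral_nonneg_AE) simp
  ultimately show ?thesis
    unfolding gibbs_expect_eq_integral by (smt (verit) divide_le_eq_1)
qed

text \<open>Jensen's inequality for the square: the variance of \<open>f\<close> is nonnegative.\<close>
lemma gibbs_expect_le_sqrt:
  assumes Z_pos: "0 < partition_fn \<mu> H"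
    and f: "f \<in> borel_measurable \<mu>" "AE \<sigma> in \<mu>. \<bar>f \<sigma>\<bar> \<le> 1"
  shows "gibbs_expect \<mu> H f \<le> sqrt (gibbs_expect \<mu> H (\<lambda>\<sigma>. (f \<sigma>)\<^sup>2))"
proof -
  define Z where "Z = (\<integral>\<sigma>. exp (- H \<sigma>) \<partial>\<mu>)"
  define a where "a = gibbs_expect \<mu> H f"
  define q where "q = gibbs_expect \<mu> H (\<lambda>\<sigma>. (f \<sigma>)\<^sup>2)"
  have Z: "0 < Z" unfolding Z_def by (rule integral_exp_neg_pos[OF Z_pos])
  have f_sq: "(\<lambda>\<sigma>. (f \<sigma>)\<^sup>2) \<in> borel_measurable \<mu>" "AE \<sigma> in \<mu>. \<bar>(f \<sigma>)\<^sup>2\<bar> \<le> 1"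
    using f by (auto simp: abs_square_le_1 elim!: eventually_mono)
  have "0 \<le> (\<integral>\<sigma>. (f \<sigma> - a)\<^sup>2 * exp (- H \<sigma>) \<partial>\<mu>)"
    by (intro integral_nonneg_AE) auto
  also have "\<dots> = (\<integral>\<sigma>. (f \<sigma>)\<^sup>2 * exp (- H \<sigma>) - (2 * a) * (f \<sigma> * exp (- H \<sigma>)) + a\<^sup>2 * exp (- H \<sigma>) \<partial>\<mu>)"
    by (simp add: power2_eq_square algebra_simps)
  also have "\<dots> = Z * q - 2 * a * (Z * a) + a\<^sup>2 * Z"
    using integrable_mult_exp_neg[OF f] integrable_mult_exp_neg[OF f_sq] integrable_exp_neg Z
    by (simp add: Z_def a_def q_def gibbs_expect_eq_integral)
  finally have "a\<^sup>2 \<le> q"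
    using Z by (simp add: power2_eq_square algebra_simps)
  then show ?thesis
    unfolding a_def q_def by (rule real_le_rsqrt)
qed

end

section \<open>Continuous spins\<close>

lemma abs_prod_le_one:
  fixes f :: "'b \<Rightarrow> 'c::linordered_idom"
  assumes "\<And>i. i \<in> I \<Longrightarrow> \<bar>f i\<bar> \<le> 1"
  shows "\<bar>\<Prod>i\<in>I. f i\<bar> \<le> 1"
  unfolding abs_prod using assms by (intro prod_le_1) auto

lemma measurable_inner_spins:
  "(\<lambda>\<sigma>::'a \<Rightarrow> real^'n. \<sigma> x \<bullet> \<sigma> y) \<in> borel_measurable (Pi\<^sub>M UNIV (\<lambda>_. borel))"
  by measurable

lemma measurable_flip_spins:
  "(\<lambda>\<sigma> x. \<eta> x *\<^sub>R (\<sigma>::'a \<Rightarrow> real^'n) x) \<in> measurable (Pi\<^sub>M UNIV (\<lambda>_. borel)) (Pi\<^sub>M UNIV (\<lambda>_. borel))"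
  by (rule measurable_PiM_single') (auto simp: PiE_def extensional_def)

lemma measurable_hamiltonian:
  fixes V :: "'a::{finite,linorder} \<Rightarrow> 'a \<Rightarrow> real \<Rightarrow> real"
  assumes V_meas: "\<And>x y. x < y \<Longrightarrow> V x y \<in> borel_measurable borel"
  shows "(hamiltonian V :: ('a \<Rightarrow> real^'n) \<Rightarrow> real) \<in> borel_measurable (Pi\<^sub>M UNIV (\<lambda>_. borel))"
proof -
  have "(\<lambda>\<sigma>::'a \<Rightarrow> real^'n. V x y (\<sigma> x \<bullet> \<sigma> y)) \<in> borel_measurable (Pi\<^sub>M UNIV (\<lambda>_. borel))"
    if "x < y" for x y
    by (rule measurable_compose[OF measurable_inner_spins V_meas[OF that]])
  then show ?thesis
    unfolding hamiltonian_def by (intro borel_measurable_uminus borel_measurable_sum) auto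
qed

definition Vplus :: "(real \<Rightarrow> real) \<Rightarrow> real \<Rightarrow> real" where
  "Vplus v s = (v s + v (- s)) / 2"

lemma apply_sign_mult: "t = 1 \<or> t = -1 \<Longrightarrow> v (t * s) = Vplus v s + Vminus v s * t"
  unfolding Vplus_def Vminus_def by (auto simp: field_simps)

lemma exp_neg_hamiltonian_flip:
  fixes V :: "'a::{finite,linorder} \<Rightarrow> 'a \<Rightarrow> real \<Rightarrow> real" and \<sigma> :: "'a \<Rightarrow> real^'n"
  assumes "\<eta> \<in> ising_configs"
  shows "exp (- hamiltonian V (\<lambda>x. \<eta> x *\<^sub>R \<sigma> x))
    = exp (\<Sum>(x, y)\<in>{(x, y). x < y}. Vplus (V x y) (\<sigma> x \<bullet> \<sigma> y))
      * ising_weight (\<lambda>x y. Vminus (V x y) (\<sigma> x \<bullet> \<sigma> y)) \<eta>"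
proof -
  have "V x y ((\<eta> x * \<eta> y) * (\<sigma> x \<bullet> \<sigma> y))
      = Vplus (V x y) (\<sigma> x \<bullet> \<sigma> y) + Vminus (V x y) (\<sigma> x \<bullet> \<sigma> y) * \<eta> x * \<eta> y" for x y
    using ising_config_cases[OF assms, of x] ising_config_cases[OF assms, of y]
    by (subst apply_sign_mult) (auto simp: mult.assoc)
  then show ?thesis
    unfolding hamiltonian_def ising_weight_def
    by (simp add: mult.assoc mult.left_commute sum.distrib exp_add split_def)
qed

lemma prod_pairs_flip:
  fixes \<sigma> :: "'a \<Rightarrow> real^'n" and n :: nat
  shows "(\<Prod>i<n. (\<eta> (xs i) *\<^sub>R \<sigma> (xs i)) \<bullet> (\<eta> (ys i) *\<^sub>R \<sigma> (ys i)))
     = (\<Prod>i<n. \<eta> (xs i) * \<eta> (ys i)) * (\<Prod>i<n. \<sigma> (xs i) \<bullet> \<sigma> (ys i))"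
  by (simp add: prod.distrib[symmetric] mult.assoc mult.left_commute)

lemma prod_abs_pairs_flip:
  fixes \<sigma> :: "'a \<Rightarrow> real^'n" and n :: nat
  assumes "\<eta> \<in> ising_configs"
  shows "(\<Prod>i<n. \<bar>(\<eta> (xs i) *\<^sub>R \<sigma> (xs i)) \<bullet> (\<eta> (ys i) *\<^sub>R \<sigma> (ys i))\<bar>)
     = (\<Prod>i<n. \<bar>\<sigma> (xs i) \<bullet> \<sigma> (ys i)\<bar>)"
proof -
  have "\<bar>\<eta> x\<bar> = 1" for x
    using ising_config_cases[OF assms, of x] by auto
  then show ?thesis by (simp add: abs_mult)
qed

lemma abs_Vminus_le_Jcoupling:
  assumes "bdd_above ((\<lambda>s. \<bar>Vminus (V x y) s\<bar>) ` {-1..1})" "\<bar>s\<bar> \<le> 1"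
  shows "\<bar>Vminus (V x y) s\<bar> \<le> Jcoupling V x y"
  unfolding Jcoupling_def using assms by (intro cSUP_upper) auto

lemma Jcoupling_nonneg:
  assumes "bdd_above ((\<lambda>s. \<bar>Vminus (V x y) s\<bar>) ` {-1..1})"
  shows "0 \<le> Jcoupling V x y"
  using abs_Vminus_le_Jcoupling[where V = V and x = x and y = y and s = 0] assms by simp

lemma ising_expect_pair_products_nonneg:
  fixes V :: "'a::{finite,linorder} \<Rightarrow> 'a \<Rightarrow> real \<Rightarrow> real" and n :: nat and xs ys :: "nat \<Rightarrow> 'a"
  assumes "\<And>x y. x < y \<Longrightarrow> bdd_above ((\<lambda>s. \<bar>Vminus (V x y) s\<bar>) ` {-1..1})"
  shows "0 \<le> ising_expect (Jcoupling V) (\<lambda>\<epsilon>. \<Prod>i<n. \<epsilon> (xs i) * \<epsilon> (ys i))"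
proof -
  obtain m where "(\<lambda>\<epsilon>::'a \<Rightarrow> real. \<Prod>i<n. \<epsilon> (xs i) * \<epsilon> (ys i)) = spin_monomial m"
    using prod_pairs_eq_spin_monomial[where n = n and xs = xs and ys = ys] by blast
  then show ?thesis
    using assms by (simp add: ising_expect_spin_monomial_nonneg Jcoupling_nonneg)
qed

text \<open>Summed over all flips of \<open>\<sigma>\<close>, the Gibbs factor becomes an Ising weight with couplings
  \<open>V\<^sup>-\<^sub>x\<^sub>y(\<sigma>\<^sub>x \<cdot> \<sigma>\<^sub>y)\<close>, bounded by \<open>J\<^sub>x\<^sub>y\<close>, so Ginibre's inequality applies.\<close>
lemma sum_flips_pair_products_le:
  fixes V :: "'a::{finite,linorder} \<Rightarrow> 'a \<Rightarrow> real \<Rightarrow> real" and \<sigma> :: "'a \<Rightarrow> real^'n"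
    and n :: nat and xs ys :: "nat \<Rightarrow> 'a"
  assumes V_bdd: "\<And>x y. x < y \<Longrightarrow> bdd_above ((\<lambda>s. \<bar>Vminus (V x y) s\<bar>) ` {-1..1})"
    and \<sigma>: "\<And>x y. \<bar>\<sigma> x \<bullet> \<sigma> y\<bar> \<le> 1"
  defines "flip \<eta> \<equiv> \<lambda>x. \<eta> x *\<^sub>R \<sigma> x"
  shows "\<bar>\<Sum>\<eta>\<in>ising_configs. (\<Prod>i<n. flip \<eta> (xs i) \<bullet> flip \<eta> (ys i)) * exp (- hamiltonian V (flip \<eta>))\<bar>
    \<le> (\<Sum>\<eta>\<in>ising_configs. ising_expect (Jcoupling V) (\<lambda>\<epsilon>. \<Prod>i<n. \<epsilon> (xs i) * \<epsilon> (ys i))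
         * ((\<Prod>i<n. \<bar>flip \<eta> (xs i) \<bullet> flip \<eta> (ys i)\<bar>) * exp (- hamiltonian V (flip \<eta>))))"
proof -
  let ?C = "ising_configs :: ('a \<Rightarrow> real) set"
  obtain m where m: "(\<lambda>\<epsilon>::'a \<Rightarrow> real. \<Prod>i<n. \<epsilon> (xs i) * \<epsilon> (ys i)) = spin_monomial m"
    using prod_pairs_eq_spin_monomial[where n = n and xs = xs and ys = ys] by blast
  define I where "I = ising_expect (Jcoupling V) (spin_monomial m)"
  define F where "F = (\<Prod>i<n. \<sigma> (xs i) \<bullet> \<sigma> (ys i))"
  define K where "K x y = Vminus (V x y) (\<sigma> x \<bullet> \<sigma> y)" for x y
  define P where "P = exp (\<Sum>(x, y)\<in>{(x, y). x < y}. Vplus (V x y) (\<sigma> x \<bullet> \<sigma> y))"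
  have weight: "exp (- hamiltonian V (flip \<eta>)) = P * ising_weight K \<eta>" if "\<eta> \<in> ?C" for \<eta>
    unfolding flip_def P_def K_def by (rule exp_neg_hamiltonian_flip[OF that])
  have F_flip: "(\<Prod>i<n. flip \<eta> (xs i) \<bullet> flip \<eta> (ys i)) = spin_monomial m \<eta> * F" for \<eta>
    unfolding flip_def F_def prod_pairs_flip by (simp add: m[symmetric])
  have A_flip: "(\<Prod>i<n. \<bar>flip \<eta> (xs i) \<bullet> flip \<eta> (ys i)\<bar>) = \<bar>F\<bar>" if "\<eta> \<in> ?C" for \<eta>
    unfolding flip_def F_def prod_abs_pairs_flip[OF that] by (simp add: abs_prod)
  have ginibre: "\<bar>\<Sum>\<eta>\<in>?C. spin_monomial m \<eta> * ising_weight K \<eta>\<bar> \<le> I * (\<Sum>\<eta>\<in>?C. ising_weight K \<eta>)"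
    unfolding I_def K_def using V_bdd \<sigma> by (intro ginibre_inequality abs_Vminus_le_Jcoupling)
  have "(\<Sum>\<eta>\<in>?C. (\<Prod>i<n. flip \<eta> (xs i) \<bullet> flip \<eta> (ys i)) * exp (- hamiltonian V (flip \<eta>)))
      = F * P * (\<Sum>\<eta>\<in>?C. spin_monomial m \<eta> * ising_weight K \<eta>)"
    by (simp add: F_flip weight sum_distrib_left ac_simps cong: sum.cong)
  then have "\<bar>\<Sum>\<eta>\<in>?C. (\<Prod>i<n. flip \<eta> (xs i) \<bullet> flip \<eta> (ys i)) * exp (- hamiltonian V (flip \<eta>))\<bar>
      = \<bar>F\<bar> * P * \<bar>\<Sum>\<eta>\<in>?C. spin_monomial m \<eta> * ising_weight K \<eta>\<bar>"
    by (simp add: abs_mult P_def)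
  also have "\<dots> \<le> \<bar>F\<bar> * P * (I * (\<Sum>\<eta>\<in>?C. ising_weight K \<eta>))"
    by (rule mult_left_mono[OF ginibre]) (simp add: P_def)
  also have "\<dots> = (\<Sum>\<eta>\<in>?C. I * ((\<Prod>i<n. \<bar>flip \<eta> (xs i) \<bullet> flip \<eta> (ys i)\<bar>) * exp (- hamiltonian V (flip \<eta>))))"
    by (simp add: A_flip weight sum_distrib_left ac_simps cong: sum.cong)
  finally show ?thesis
    unfolding m I_def .
qed

lemma abs_gibbs_expect_pair_products_le:
  fixes V :: "'a::{finite,linorder} \<Rightarrow> 'a \<Rightarrow> real \<Rightarrow> real"
    and \<mu> :: "('a \<Rightarrow> real^'n) measure"
    and n :: nat and xs ys :: "nat \<Rightarrow> 'a"
  assumes V_meas: "\<And>x y. x < y \<Longrightarrow> V x y \<in> borel_measurable borel"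
    and V_bdd: "\<And>x y. x < y \<Longrightarrow> bdd_above ((\<lambda>s. \<bar>Vminus (V x y) s\<bar>) ` {-1..1})"
    and sets_mu: "sets \<mu> = sets (Pi\<^sub>M UNIV (\<lambda>_. borel))"
    and bounded: "AE \<sigma> in \<mu>. \<forall>x y. \<bar>\<sigma> x \<bullet> \<sigma> y\<bar> \<le> 1"
    and flip_inv: "\<And>\<eta>::'a \<Rightarrow> real. (\<forall>x. \<eta> x = 1 \<or> \<eta> x = -1) \<Longrightarrow>
                     distr \<mu> \<mu> (\<lambda>\<sigma> x. \<eta> x *\<^sub>R \<sigma> x) = \<mu>"
    and Z_fin: "partition_fn \<mu> (hamiltonian V) < \<infinity>"
  shows "\<bar>gibbs_expect \<mu> (hamiltonian V) (\<lambda>\<sigma>. \<Prod>i<n. \<sigma> (xs i) \<bullet> \<sigma> (ys i))\<bar>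
    \<le> ising_expect (Jcoupling V) (\<lambda>\<epsilon>. \<Prod>i<n. \<epsilon> (xs i) * \<epsilon> (ys i))
      * gibbs_expect \<mu> (hamiltonian V) (\<lambda>\<sigma>. \<Prod>i<n. \<bar>\<sigma> (xs i) \<bullet> \<sigma> (ys i)\<bar>)"
proof -
  define I where "I = ising_expect (Jcoupling V) (\<lambda>\<epsilon>. \<Prod>i<n. \<epsilon> (xs i) * \<epsilon> (ys i))"
  define G where "G \<sigma> = exp (- hamiltonian V \<sigma>)" for \<sigma> :: "'a \<Rightarrow> real^'n"
  define f where "f \<sigma> = (\<Prod>i<n. \<sigma> (xs i) \<bullet> \<sigma> (ys i)) * G \<sigma>" for \<sigma>
  define g where "g \<sigma> = I * ((\<Prod>i<n. \<bar>\<sigma> (xs i) \<bullet> \<sigma> (ys i)\<bar>) * G \<sigma>)" for \<sigma>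
  have meas_mu: "measurable \<mu> N = measurable (Pi\<^sub>M UNIV (\<lambda>_. borel)) N" for N :: "'b measure"
    by (rule measurable_cong_sets[OF sets_mu refl])
  have H_meas: "hamiltonian V \<in> borel_measurable \<mu>"
    unfolding meas_mu by (rule measurable_hamiltonian[OF V_meas])
  have [measurable]: "(\<lambda>\<sigma>. \<sigma> x \<bullet> \<sigma> y) \<in> borel_measurable \<mu>" for x y
    unfolding meas_mu by measurable
  have products_bounded: "AE \<sigma> in \<mu>. \<bar>\<Prod>i<n. \<sigma> (xs i) \<bullet> \<sigma> (ys i)\<bar> \<le> 1 \<and> \<bar>\<Prod>i<n. \<bar>\<sigma> (xs i) \<bullet> \<sigma> (ys i)\<bar>\<bar> \<le> 1"
    using bounded by eventually_elim (auto intro: abs_prod_le_one)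
  have integrable: "integrable \<mu> f" "integrable \<mu> g"
    unfolding f_def g_def G_def using products_bounded
    by (auto intro!: integrable_mult_exp_neg[OF H_meas Z_fin] elim: eventually_mono)
  moreover have "\<bar>\<integral>\<sigma>. f \<sigma> \<partial>\<mu>\<bar> \<le> (\<integral>\<sigma>. g \<sigma> \<partial>\<mu>)"
  proof (rule abs_integral_le_by_symmetrization
      [where S = ising_configs and T = "\<lambda>\<eta> \<sigma> x. \<eta> x *\<^sub>R \<sigma> x"])
    show "finite (ising_configs :: ('a \<Rightarrow> real) set)" "ising_configs \<noteq> {}"
      using ising_configs_finite one_in_ising_configs by auto
    show "(\<lambda>\<sigma> x. \<eta> x *\<^sub>R \<sigma> x) \<in> measurable \<mu> \<mu>" for \<eta>
      using measurable_flip_spins measurable_cong_sets[OF sets_mu sets_mu] by simp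
    show "distr \<mu> \<mu> (\<lambda>\<sigma> x. \<eta> x *\<^sub>R \<sigma> x) = \<mu>" if "\<eta> \<in> ising_configs" for \<eta>
      using that flip_inv by (simp add: ising_configs_def)
    show "AE \<sigma> in \<mu>. \<bar>\<Sum>\<eta>\<in>ising_configs. f (\<lambda>x. \<eta> x *\<^sub>R \<sigma> x)\<bar> \<le> (\<Sum>\<eta>\<in>ising_configs. g (\<lambda>x. \<eta> x *\<^sub>R \<sigma> x))"
      using bounded unfolding f_def g_def G_def I_def
      by eventually_elim (intro sum_flips_pair_products_le V_bdd, auto)
  qed (use integrable in auto)
  moreover have "0 \<le> (\<integral>\<sigma>. G \<sigma> \<partial>\<mu>)"
    unfolding G_def by (rule integral_nonneg_AE) simp
  ultimately show ?thesis
    using gibbs_expect_eq_integral[OF H_meas Z_fin]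
    by (simp add: f_def g_def G_def I_def divide_right_mono abs_div)
qed

theorem theoremC5:
  fixes V :: "'a::{finite,linorder} \<Rightarrow> 'a \<Rightarrow> real \<Rightarrow> real"
    and \<mu> :: "('a \<Rightarrow> real^'n) measure"
    and n :: nat and xs ys :: "nat \<Rightarrow> 'a"
  assumes V_meas: "\<And>x y. x < y \<Longrightarrow> V x y \<in> borel_measurable borel"
    and V_bdd: "\<And>x y. x < y \<Longrightarrow> bdd_above ((\<lambda>s. \<bar>Vminus (V x y) s\<bar>) ` {-1..1})"
    and sets_mu: "sets \<mu> = sets (Pi\<^sub>M UNIV (\<lambda>_. borel))"
    and sphere: "AE \<sigma> in \<mu>. \<forall>x. norm (\<sigma> x) = 1"
    and flip_inv: "\<And>\<eta>::'a \<Rightarrow> real. (\<forall>x. \<eta> x = 1 \<or> \<eta> x = -1) \<Longrightarrow>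
                     distr \<mu> \<mu> (\<lambda>\<sigma> x. \<eta> x *\<^sub>R \<sigma> x) = \<mu>"
    and Z_pos: "0 < partition_fn \<mu> (hamiltonian V)"
    and Z_fin: "partition_fn \<mu> (hamiltonian V) < \<infinity>"
  shows
    "\<bar>gibbs_expect \<mu> (hamiltonian V) (\<lambda>\<sigma>. \<Prod>i<n. \<sigma> (xs i) \<bullet> \<sigma> (ys i))\<bar>
       \<le> ising_expect (Jcoupling V) (\<lambda>\<epsilon>. \<Prod>i<n. \<epsilon> (xs i) * \<epsilon> (ys i))
         * gibbs_expect \<mu> (hamiltonian V) (\<lambda>\<sigma>. \<Prod>i<n. \<bar>\<sigma> (xs i) \<bullet> \<sigma> (ys i)\<bar>)
     \<and> ising_expect (Jcoupling V) (\<lambda>\<epsilon>. \<Prod>i<n. \<epsilon> (xs i) * \<epsilon> (ys i))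
         * gibbs_expect \<mu> (hamiltonian V) (\<lambda>\<sigma>. \<Prod>i<n. \<bar>\<sigma> (xs i) \<bullet> \<sigma> (ys i)\<bar>)
       \<le> ising_expect (Jcoupling V) (\<lambda>\<epsilon>. \<Prod>i<n. \<epsilon> (xs i) * \<epsilon> (ys i))
         * sqrt (gibbs_expect \<mu> (hamiltonian V) (\<lambda>\<sigma>. \<Prod>i<n. (\<sigma> (xs i) \<bullet> \<sigma> (ys i))\<^sup>2))
     \<and> ising_expect (Jcoupling V) (\<lambda>\<epsilon>. \<Prod>i<n. \<epsilon> (xs i) * \<epsilon> (ys i))
         * sqrt (gibbs_expect \<mu> (hamiltonian V) (\<lambda>\<sigma>. \<Prod>i<n. (\<sigma> (xs i) \<bullet> \<sigma> (ys i))\<^sup>2))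
       \<le> ising_expect (Jcoupling V) (\<lambda>\<epsilon>. \<Prod>i<n. \<epsilon> (xs i) * \<epsilon> (ys i))"
proof -
  let ?I = "ising_expect (Jcoupling V) (\<lambda>\<epsilon>. \<Prod>i<n. \<epsilon> (xs i) * \<epsilon> (ys i))"
  let ?A = "\<lambda>\<sigma>. \<Prod>i<n. \<bar>\<sigma> (xs i) \<bullet> \<sigma> (ys i)\<bar>"
  have meas_mu: "measurable \<mu> N = measurable (Pi\<^sub>M UNIV (\<lambda>_. borel)) N" for N :: "'b measure"
    by (rule measurable_cong_sets[OF sets_mu refl])
  have H_meas: "hamiltonian V \<in> borel_measurable \<mu>"
    unfolding meas_mu by (rule measurable_hamiltonian[OF V_meas])
  have A_meas: "?A \<in> borel_measurable \<mu>"
    unfolding meas_mu by measurable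
  have bounded: "AE \<sigma> in \<mu>. \<forall>x y. \<bar>\<sigma> x \<bullet> \<sigma> y\<bar> \<le> 1"
    using sphere by eventually_elim (metis Cauchy_Schwarz_ineq2 mult_1_right)
  then have A_bounded: "AE \<sigma> in \<mu>. \<bar>?A \<sigma>\<bar> \<le> 1"
    by eventually_elim (auto intro: abs_prod_le_one)
  have ginibre: "\<bar>gibbs_expect \<mu> (hamiltonian V) (\<lambda>\<sigma>. \<Prod>i<n. \<sigma> (xs i) \<bullet> \<sigma> (ys i))\<bar>
      \<le> ?I * gibbs_expect \<mu> (hamiltonian V) ?A"
    by (rule abs_gibbs_expect_pair_products_le[OF V_meas V_bdd sets_mu bounded flip_inv Z_fin])
  have jensen: "gibbs_expect \<mu> (hamiltonian V) ?A \<le> sqrt (gibbs_expect \<mu> (hamiltonian V) (\<lambda>\<sigma>. (?A \<sigma>)\<^sup>2))"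
    by (rule gibbs_expect_le_sqrt[OF H_meas Z_fin Z_pos A_meas A_bounded])
  have le_one: "gibbs_expect \<mu> (hamiltonian V) (\<lambda>\<sigma>. (?A \<sigma>)\<^sup>2) \<le> 1"
    using A_meas A_bounded
    by (intro gibbs_expect_le_one[OF H_meas Z_fin]) (auto simp: abs_square_le_1 elim!: eventually_mono)
  have squares: "(\<lambda>\<sigma>. (?A \<sigma>)\<^sup>2) = (\<lambda>\<sigma>. \<Prod>i<n. (\<sigma> (xs i) \<bullet> \<sigma> (ys i))\<^sup>2)"
    by (simp add: prod_power_distrib)
  have "0 \<le> ?I"
    using V_bdd by (rule ising_expect_pair_products_nonneg)
  then show ?thesis
    using ginibre jensen le_one unfolding squares by (simp add: mult_left_mono mult_left_le)
qed

end
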